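(* Let $q:\mathsf D\to\mathbb R$ have sensitivity $\Delta q\in(0,\infty)$, and let $k>0$, $\theta>0$. If $\Lambda\sim\Gamma(k,\theta)$ (density $\frac{x^{k-1}e^{-x/\theta}}{\Gamma(k)\theta^k}$ for $x>0$), then the Randomized DP Laplace mechanism with reciprocal scale $\Lambda$ satisfies $\big((k+1)\ln(1+\Delta q\,\theta)\big)$-differential privacy; moreover $\ln[\mathbb E(\Lambda)/M'_\Lambda(-\Delta q)]=(k+1)\ln(1+\Delta q\,\theta)$.
   Context: Databases form a set $\mathsf D$ with a symmetric adjacency relation; the sensitivity of $q$ is $\Delta q=\sup\{|q(d)-q(d')|:d,d'\text{ adjacent}\}$. A mechanism $M$ is $\epsilon$-DP if $\mathbb P(M(d)\in S)\le e^\epsilon\mathbb P(M(d')\in S)$ for all adjacent $d,d'$ and Borel $S$. The Randomized DP Laplace mechanism with reciprocal-scale distribution $\Lambda$ (a random variable with values in $(0,\infty)$, playing the role of $1/b$ for the Laplace scale $b$) is defined by $\mathcal M_q(d)=q(d)+W$, where conditionally on $\Lambda=\lambda$ the noise $W$ is Laplace with mean $0$ and scale $1/\lambda$, i.e. has density $\frac{\lambda}{2}e^{-\lambda|w|}$; the pair $(\Lambda,W)$ is drawn independently of $d$. $M_\Lambda(t)=\mathbb E[e^{t\Lambda}]$, $M'_\Lambda(t)=\mathbb E[\Lambda e^{t\Lambda}]$. *)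

theory Defs
  imports "HOL-Probability.Probability"
begin

definition sensitivity :: "('d \<Rightarrow> 'd \<Rightarrow> bool) \<Rightarrow> ('d \<Rightarrow> real) \<Rightarrow> ereal" where
  "sensitivity adj q = (SUP p \<in> {(d, d'). adj d d'}. ereal \<bar>q (fst p) - q (snd p)\<bar>)"

definition differentially_private ::
  "('d \<Rightarrow> 'd \<Rightarrow> bool) \<Rightarrow> ('d \<Rightarrow> real measure) \<Rightarrow> real \<Rightarrow> bool" where
  "differentially_private adj M eps \<longleftrightarrow>
     (\<forall>d d'. adj d d' \<longrightarrow>
        (\<forall>S \<in> sets borel. measure (M d) S \<le> exp eps * measure (M d') S))"

definition gamma_pdf :: "real \<Rightarrow> real \<Rightarrow> real \<Rightarrow> real" where
  "gamma_pdf k \<theta> x = (if x > 0 then x powr (k - 1) * exp (- x / \<theta>) / (Gamma k * \<theta> powr k) else 0)"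

definition laplace_pdf :: "real \<Rightarrow> real \<Rightarrow> real" where
  "laplace_pdf l w = (if l > 0 then l / 2 * exp (- l * \<bar>w\<bar>) else 0)"

(* Joint law of (Lambda, W): Lambda has density f on (0,\<infinity>), W | Lambda = l is Laplace(0, 1/l) *)
definition rdp_noise :: "(real \<Rightarrow> real) \<Rightarrow> (real \<times> real) measure" where
  "rdp_noise f = density (lborel \<Otimes>\<^sub>M lborel) (\<lambda>(l, w). ennreal (f l * laplace_pdf l w))"

definition rdp_laplace_mech :: "(real \<Rightarrow> real) \<Rightarrow> ('d \<Rightarrow> real) \<Rightarrow> 'd \<Rightarrow> real measure" where
  "rdp_laplace_mech f q d = distr (rdp_noise f) borel (\<lambda>(l, w). q d + w)"

(* E[Lambda] and M'_Lambda(t) = E[Lambda e^{t Lambda}] for Lambda with density f *)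
definition mean_of_pdf :: "(real \<Rightarrow> real) \<Rightarrow> real" where
  "mean_of_pdf f = (\<integral>x. x * f x \<partial>lborel)"

definition mgf_deriv_of_pdf :: "(real \<Rightarrow> real) \<Rightarrow> real \<Rightarrow> real" where
  "mgf_deriv_of_pdf f t = (\<integral>x. x * exp (t * x) * f x \<partial>lborel)"

end

theory Submission
  imports Defs
begin

text \<open>
  Integrating out \<open>\<Lambda> \<sim> \<Gamma>(k, \<theta>)\<close> shows that the noise \<open>W\<close> has the density
  \<open>h(w) = k \<theta> / (2 (1 + \<theta> |w|)\<^sup>k\<^sup>+\<^sup>1)\<close>, since
  \<open>\<integral> \<lambda> e\<^sup>-\<^sup>b\<^sup>\<lambda> f\<^sub>\<Gamma>(\<lambda>) d\<lambda> = k \<theta> / (1 + \<theta> b)\<^sup>k\<^sup>+\<^sup>1\<close>.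
  The elementary inequality \<open>1 + \<theta> |w + c| \<le> (1 + \<theta> |c|) (1 + \<theta> |w|)\<close> bounds the ratio
  \<open>h(w) / h(w + c)\<close> by \<open>(1 + \<Delta> \<theta>)\<^sup>k\<^sup>+\<^sup>1\<close> whenever \<open>|c| \<le> \<Delta>\<close>, which is the privacy
  guarantee of an additive-noise mechanism. The same integral with \<open>b = 0\<close> and \<open>b = \<Delta>\<close> gives
  \<open>E \<Lambda> = k \<theta>\<close> and \<open>M'\<^sub>\<Lambda>(-\<Delta>) = k \<theta> / (1 + \<Delta> \<theta>)\<^sup>k\<^sup>+\<^sup>1\<close>.
\<close>

subsection \<open>Gamma integrals\<close>

lemma nn_integral_powr_exp_eq_Gamma:
  fixes s a :: real
  assumes "0 < s" and "0 < a"
  shows "(\<integral>\<^sup>+x. ennreal (indicator {0..} x * x powr (s - 1) * exp (- (a * x))) \<partial>lborel)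
         = ennreal (Gamma s / a powr s)"
proof -
  have "(\<integral>\<^sup>+x. ennreal (indicator {0..} x * x powr (s - 1) * exp (- (a * x))) \<partial>lborel)
      = ennreal \<bar>1 / a\<bar> * (\<integral>\<^sup>+x. ennreal (indicator {0..} (0 + (1 / a) * x)
          * (0 + (1 / a) * x) powr (s - 1) * exp (- (a * (0 + (1 / a) * x)))) \<partial>lborel)"
    using assms by (intro nn_integral_real_affine) auto
  also have "\<dots> = (\<integral>\<^sup>+x. ennreal (1 / a powr s) * ennreal (indicator {0..} x * x powr (s - 1) / exp x) \<partial>lborel)"
    by (subst nn_integral_cmult[symmetric], simp, intro nn_integral_cong)
       (use assms in \<open>auto simp: indicator_def ennreal_mult'[symmetric] powr_divide powr_diff exp_minus field_simps\<close>)
  also have "\<dots> = ennreal (1 / a powr s) * ennreal (Gamma s)"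
    using assms by (subst nn_integral_cmult) (auto simp: Gamma_conv_nn_integral_real)
  also have "\<dots> = ennreal (Gamma s / a powr s)"
    using assms by (simp add: ennreal_mult'[symmetric] Gamma_real_pos less_imp_le)
  finally show ?thesis .
qed

lemma gamma_pdf_nonneg: "0 < k \<Longrightarrow> 0 < \<theta> \<Longrightarrow> 0 \<le> gamma_pdf k \<theta> x"
  by (auto simp: gamma_pdf_def intro!: divide_nonneg_pos Gamma_real_pos)

lemma gamma_pdf_nonpos: "x \<le> 0 \<Longrightarrow> gamma_pdf k \<theta> x = 0"
  by (simp add: gamma_pdf_def)

lemma borel_measurable_gamma_pdf [measurable]: "gamma_pdf k \<theta> \<in> borel_measurable borel"
  unfolding gamma_pdf_def by measurable

lemma gamma_pdf_times_powr_exp: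
  assumes "0 < \<theta>"
  shows "gamma_pdf k \<theta> x * x powr p * exp (- (b * x))
       = 1 / (Gamma k * \<theta> powr k)
         * (indicator {0..} x * x powr (k + p - 1) * exp (- ((1 + \<theta> * b) / \<theta> * x)))"
proof (cases "0 < x")
  case True
  have "x powr (k - 1) * x powr p = x powr (k + p - 1)"
    by (simp add: powr_add[symmetric] algebra_simps)
  moreover have "exp (- x / \<theta>) * exp (- (b * x)) = exp (- ((1 + \<theta> * b) / \<theta> * x))"
    using assms by (simp add: exp_add[symmetric] field_simps)
  ultimately show ?thesis
    using True by (simp add: gamma_pdf_def) (metis (no_types, opaque_lifting) mult.assoc mult.commute)
qed (auto simp: gamma_pdf_def indicator_def)

text \<open>The hypothesis \<open>1 + \<theta> b > 0\<close> says that \<open>-b\<close> lies below \<open>1/\<theta>\<close>, the abscissa of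
  convergence of the moment generating function.\<close>
lemma nn_integral_gamma_pdf_powr_exp:
  assumes k: "0 < k" and \<theta>: "0 < \<theta>" and p: "0 < k + p" and b: "0 < 1 + \<theta> * b"
  shows "(\<integral>\<^sup>+x. ennreal (gamma_pdf k \<theta> x * x powr p * exp (- (b * x))) \<partial>lborel)
         = ennreal (Gamma (k + p) * \<theta> powr p / (Gamma k * (1 + \<theta> * b) powr (k + p)))"
proof -
  define C where "C = Gamma k * \<theta> powr k"
  have C: "0 < C" using k \<theta> by (simp add: C_def Gamma_real_pos)
  have rate: "0 < (1 + \<theta> * b) / \<theta>" using b \<theta> by simp
  have "(\<integral>\<^sup>+x. ennreal (gamma_pdf k \<theta> x * x powr p * exp (- (b * x))) \<partial>lborel)
      = (\<integral>\<^sup>+x. ennreal (1 / C) * ennreal (indicator {0..} x * x powr (k + p - 1)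
          * exp (- ((1 + \<theta> * b) / \<theta> * x))) \<partial>lborel)"
    unfolding gamma_pdf_times_powr_exp[OF \<theta>] C_def[symmetric]
    using C by (intro nn_integral_cong) (simp add: ennreal_mult'[symmetric])
  also have "\<dots> = ennreal (1 / C) * ennreal (Gamma (k + p) / ((1 + \<theta> * b) / \<theta>) powr (k + p))"
    unfolding nn_integral_powr_exp_eq_Gamma[OF p rate, symmetric] by (rule nn_integral_cmult) measurable
  also have "\<dots> = ennreal (Gamma (k + p) * \<theta> powr p / (Gamma k * (1 + \<theta> * b) powr (k + p)))"
  proof -
    have "((1 + \<theta> * b) / \<theta>) powr (k + p) = (1 + \<theta> * b) powr (k + p) / (\<theta> powr k * \<theta> powr p)"
      using b \<theta> by (simp add: powr_divide powr_add)
    then show ?thesis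
      using C \<theta> by (simp add: ennreal_mult'[symmetric] C_def)
  qed
  finally show ?thesis .
qed

lemma nn_integral_gamma_pdf:
  assumes "0 < k" and "0 < \<theta>"
  shows "(\<integral>\<^sup>+x. ennreal (gamma_pdf k \<theta> x) \<partial>lborel) = 1"
proof -
  have "(\<integral>\<^sup>+x. ennreal (gamma_pdf k \<theta> x) \<partial>lborel)
      = (\<integral>\<^sup>+x. ennreal (gamma_pdf k \<theta> x * x powr 0 * exp (- (0 * x))) \<partial>lborel)"
    by (intro nn_integral_cong) (simp add: gamma_pdf_nonpos)
  also have "\<dots> = ennreal (Gamma (k + 0) * \<theta> powr 0 / (Gamma k * (1 + \<theta> * 0) powr (k + 0)))"
    using assms by (intro nn_integral_gamma_pdf_powr_exp) auto
  also have "\<dots> = 1"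
    using Gamma_real_pos[OF assms(1)] assms(2) by simp
  finally show ?thesis .
qed

lemma nn_integral_gamma_pdf_times_exp:
  assumes "0 < k" and "0 < \<theta>" and "0 < 1 + \<theta> * b"
  shows "(\<integral>\<^sup>+x. ennreal (gamma_pdf k \<theta> x * x * exp (- (b * x))) \<partial>lborel)
         = ennreal (k * \<theta> / (1 + \<theta> * b) powr (k + 1))"
proof -
  have "(\<integral>\<^sup>+x. ennreal (gamma_pdf k \<theta> x * x * exp (- (b * x))) \<partial>lborel)
      = (\<integral>\<^sup>+x. ennreal (gamma_pdf k \<theta> x * x powr 1 * exp (- (b * x))) \<partial>lborel)"
    by (intro nn_integral_cong) (simp add: gamma_pdf_def)
  also have "\<dots> = ennreal (Gamma (k + 1) * \<theta> powr 1 / (Gamma k * (1 + \<theta> * b) powr (k + 1)))"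
    using assms by (intro nn_integral_gamma_pdf_powr_exp) auto
  also have "\<dots> = ennreal (k * \<theta> / (1 + \<theta> * b) powr (k + 1))"
  proof -
    have "Gamma (k + 1) = k * Gamma k"
      using assms(1) by (intro Gamma_plus1) (auto simp: nonpos_Ints_def)
    then show ?thesis
      using Gamma_real_pos[OF assms(1)] assms(2) by simp
  qed
  finally show ?thesis .
qed

lemma mgf_deriv_of_gamma_pdf:
  assumes "0 < k" and "0 < \<theta>" and "\<theta> * t < 1"
  shows "mgf_deriv_of_pdf (gamma_pdf k \<theta>) t = k * \<theta> / (1 - \<theta> * t) powr (k + 1)"
proof -
  have "0 \<le> x * exp (t * x) * gamma_pdf k \<theta> x" for x
    using assms by (cases "0 < x") (auto simp: gamma_pdf_nonpos intro!: mult_nonneg_nonneg gamma_pdf_nonneg)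
  then have "mgf_deriv_of_pdf (gamma_pdf k \<theta>) t
      = enn2real (\<integral>\<^sup>+x. ennreal (gamma_pdf k \<theta> x * x * exp (- ((- t) * x))) \<partial>lborel)"
    unfolding mgf_deriv_of_pdf_def by (subst integral_eq_nn_integral) (auto simp: mult_ac)
  also have "\<dots> = k * \<theta> / (1 - \<theta> * t) powr (k + 1)"
    using assms by (subst nn_integral_gamma_pdf_times_exp) auto
  finally show ?thesis .
qed

lemma mean_of_gamma_pdf:
  assumes "0 < k" and "0 < \<theta>"
  shows "mean_of_pdf (gamma_pdf k \<theta>) = k * \<theta>"
  using mgf_deriv_of_gamma_pdf[OF assms, of 0] by (simp add: mean_of_pdf_def mgf_deriv_of_pdf_def)

subsection \<open>Additive noise mechanisms\<close>

lemma abs_diff_le_sensitivity: "adj d d' \<Longrightarrow> ereal \<bar>q d - q d'\<bar> \<le> sensitivity adj q"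
  unfolding sensitivity_def by (rule SUP_upper2[of "(d, d')"]) auto

lemma emeasure_distr_density:
  assumes [measurable]: "g \<in> borel_measurable M" "h \<in> measurable M borel" "S \<in> sets borel"
  shows "emeasure (distr (density M g) borel h) S = (\<integral>\<^sup>+x. g x * indicator S (h x) \<partial>M)"
  by (subst emeasure_distr) (auto simp: emeasure_density intro!: nn_integral_cong split: split_indicator)

lemma differentially_private_additive_noise:
  fixes g :: "real \<Rightarrow> ennreal"
  assumes g [measurable]: "g \<in> borel_measurable borel"
    and finite: "(\<integral>\<^sup>+w. g w \<partial>lborel) \<noteq> \<infinity>"
    and sensitivity: "sensitivity adj q \<le> ereal \<Delta>"
    and shift: "\<And>w c. \<bar>c\<bar> \<le> \<Delta> \<Longrightarrow> g w \<le> ennreal (exp \<epsilon>) * g (w + c)"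
  shows "differentially_private adj (\<lambda>d. distr (density lborel g) borel (\<lambda>w. q d + w)) \<epsilon>"
  unfolding differentially_private_def
proof (intro allI impI ballI)
  fix d d' and S :: "real set"
  assume "adj d d'" and S [measurable]: "S \<in> sets borel"
  let ?M = "\<lambda>d. distr (density lborel g) borel (\<lambda>w. q d + w)"
  define c where "c = q d - q d'"
  have c: "\<bar>c\<bar> \<le> \<Delta>"
    using order_trans[OF abs_diff_le_sensitivity[of adj d d' q, OF \<open>adj d d'\<close>] sensitivity]
    by (simp add: c_def)
  have "emeasure (?M d) S = (\<integral>\<^sup>+w. g w * indicator S (q d + w) \<partial>lborel)"
    by (rule emeasure_distr_density) auto
  also have "\<dots> \<le> (\<integral>\<^sup>+w. ennreal (exp \<epsilon>) * (g (c + 1 * w) * indicator S (q d' + (c + 1 * w))) \<partial>lborel)"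
    using shift[OF c]
    by (intro nn_integral_mono) (simp add: c_def add.commute mult.assoc[symmetric] mult_right_mono)
  also have "\<dots> = ennreal (exp \<epsilon>) * (\<integral>\<^sup>+u. g u * indicator S (q d' + u) \<partial>lborel)"
    by (subst nn_integral_cmult)
       (simp_all add: nn_integral_real_affine[of "\<lambda>u. g u * indicator S (q d' + u)" 1 c])
  also have "(\<integral>\<^sup>+u. g u * indicator S (q d' + u) \<partial>lborel) = emeasure (?M d') S"
    by (rule emeasure_distr_density[symmetric]) auto
  finally have le: "emeasure (?M d) S \<le> ennreal (exp \<epsilon>) * emeasure (?M d') S" .
  have "emeasure (?M d'') S \<noteq> \<infinity>" for d''
  proof -
    have "emeasure (?M d'') S \<le> emeasure (?M d'') UNIV"
      by (rule emeasure_mono) auto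
    also have "\<dots> = (\<integral>\<^sup>+w. g w \<partial>lborel)"
      by (subst emeasure_distr_density) auto
    finally show ?thesis
      using finite by (auto simp: top_unique)
  qed
  then show "measure (?M d) S \<le> exp \<epsilon> * measure (?M d') S"
    using le by (simp add: emeasure_eq_ennreal_measure ennreal_mult'[symmetric] ennreal_le_iff)
qed

subsection \<open>The randomized Laplace mechanism\<close>

definition laplace_mixture_density :: "(real \<Rightarrow> real) \<Rightarrow> real \<Rightarrow> ennreal" where
  "laplace_mixture_density f w = (\<integral>\<^sup>+l. ennreal (f l * laplace_pdf l w) \<partial>lborel)"

lemma borel_measurable_laplace_pdf [measurable (raw)]:
  assumes [measurable]: "l \<in> borel_measurable M" "w \<in> borel_measurable M"
  shows "(\<lambda>x. laplace_pdf (l x) (w x)) \<in> borel_measurable M"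
  unfolding laplace_pdf_def by measurable

lemma borel_measurable_laplace_mixture_density [measurable]:
  assumes [measurable]: "f \<in> borel_measurable borel"
  shows "laplace_mixture_density f \<in> borel_measurable borel"
  unfolding laplace_mixture_density_def by measurable

lemma rdp_laplace_mech_eq_distr:
  assumes [measurable]: "f \<in> borel_measurable borel"
  shows "rdp_laplace_mech f q d
       = distr (density lborel (laplace_mixture_density f)) borel (\<lambda>w. q d + w)"
proof (rule measure_eqI)
  fix S :: "real set"
  assume "S \<in> sets (rdp_laplace_mech f q d)"
  then have [measurable]: "S \<in> sets borel"
    by (simp add: rdp_laplace_mech_def)
  have "emeasure (rdp_laplace_mech f q d) S
      = (\<integral>\<^sup>+(l, w). ennreal (f l * laplace_pdf l w) * indicator S (q d + w) \<partial>(lborel \<Otimes>\<^sub>M lborel))"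
    unfolding rdp_laplace_mech_def rdp_noise_def
    by (subst emeasure_distr_density) (auto simp: case_prod_unfold)
  also have "\<dots> = (\<integral>\<^sup>+w. \<integral>\<^sup>+l. ennreal (f l * laplace_pdf l w) * indicator S (q d + w) \<partial>lborel \<partial>lborel)"
    by (subst lborel_pair.nn_integral_snd[symmetric]) (auto simp: case_prod_unfold)
  also have "\<dots> = (\<integral>\<^sup>+w. laplace_mixture_density f w * indicator S (q d + w) \<partial>lborel)"
    unfolding laplace_mixture_density_def by (intro nn_integral_cong nn_integral_multc) measurable
  also have "\<dots> = emeasure (distr (density lborel (laplace_mixture_density f)) borel (\<lambda>w. q d + w)) S"
    by (rule emeasure_distr_density[symmetric]) auto
  finally show "emeasure (rdp_laplace_mech f q d) S = \<dots>" .
qed (simp add: rdp_laplace_mech_def)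

lemma laplace_pdf_nonneg: "0 \<le> laplace_pdf l w"
  by (simp add: laplace_pdf_def)

lemma nn_integral_laplace_pdf_le: "(\<integral>\<^sup>+w. ennreal (laplace_pdf l w) \<partial>lborel) \<le> 1"
proof (cases "0 < l")
  case True
  have exponential: "(\<integral>\<^sup>+w. ennreal (exponential_density l w) \<partial>lborel) = 1"
  proof -
    interpret prob_space "density lborel (exponential_density l)"
      using prob_space_exponential_density[OF True] .
    show ?thesis
      using emeasure_space_1 by (simp add: emeasure_density)
  qed
  then have reflected: "(\<integral>\<^sup>+w. ennreal (exponential_density l (- w)) \<partial>lborel) = 1"
    using nn_integral_real_affine[of "\<lambda>w. ennreal (exponential_density l w)" "-1" 0] by simp
  have "(\<integral>\<^sup>+w. ennreal (laplace_pdf l w) \<partial>lborel)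
      \<le> (\<integral>\<^sup>+w. ennreal (1/2) * ennreal (exponential_density l w)
                + ennreal (1/2) * ennreal (exponential_density l (- w)) \<partial>lborel)"
  proof (intro nn_integral_mono)
    fix w
    have "laplace_pdf l w \<le> 1/2 * exponential_density l w + 1/2 * exponential_density l (- w)"
      using True by (auto simp: laplace_pdf_def exponential_density_def abs_if mult.commute)
    then have "ennreal (laplace_pdf l w)
        \<le> ennreal (1/2 * exponential_density l w + 1/2 * exponential_density l (- w))"
      by (rule ennreal_leI)
    also have "\<dots> = ennreal (1/2) * ennreal (exponential_density l w)
                    + ennreal (1/2) * ennreal (exponential_density l (- w))"
      using True exponential_density_nonneg[of l]
      by (metis ennreal_mult' ennreal_plus mult_nonneg_nonneg zero_le_divide_1_iff zero_le_numeral)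
    finally show "ennreal (laplace_pdf l w) \<le> \<dots>" .
  qed
  also have "\<dots> = ennreal (1/2) + ennreal (1/2)"
    by (subst nn_integral_add) (auto simp: nn_integral_cmult exponential reflected)
  also have "\<dots> = 1"
    by (subst ennreal_plus[symmetric]) auto
  finally show ?thesis .
qed (simp add: laplace_pdf_def)

lemma nn_integral_laplace_mixture_density_le:
  assumes [measurable]: "f \<in> borel_measurable borel"
  shows "(\<integral>\<^sup>+w. laplace_mixture_density f w \<partial>lborel) \<le> (\<integral>\<^sup>+l. ennreal (f l) \<partial>lborel)"
proof -
  have "(\<integral>\<^sup>+w. laplace_mixture_density f w \<partial>lborel)
      = (\<integral>\<^sup>+l. \<integral>\<^sup>+w. ennreal (f l * laplace_pdf l w) \<partial>lborel \<partial>lborel)"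
    unfolding laplace_mixture_density_def by (rule lborel_pair.Fubini') measurable
  also have "\<dots> \<le> (\<integral>\<^sup>+l. ennreal (f l) \<partial>lborel)"
  proof (intro nn_integral_mono)
    fix l
    have "(\<integral>\<^sup>+w. ennreal (f l * laplace_pdf l w) \<partial>lborel)
        \<le> (\<integral>\<^sup>+w. ennreal (f l) * ennreal (laplace_pdf l w) \<partial>lborel)"
      by (intro nn_integral_mono)
        (cases "0 \<le> f l"; simp add: ennreal_mult' laplace_pdf_nonneg ennreal_neg mult_nonpos_nonneg)
    also have "\<dots> = ennreal (f l) * (\<integral>\<^sup>+w. ennreal (laplace_pdf l w) \<partial>lborel)"
      by (rule nn_integral_cmult) measurable
    also have "\<dots> \<le> ennreal (f l)"
      using mult_left_mono[OF nn_integral_laplace_pdf_le, of "ennreal (f l)" l] by simp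
    finally show "(\<integral>\<^sup>+w. ennreal (f l * laplace_pdf l w) \<partial>lborel) \<le> ennreal (f l)" .
  qed
  finally show ?thesis .
qed

lemma laplace_mixture_density_gamma_pdf:
  assumes "0 < k" and "0 < \<theta>"
  shows "laplace_mixture_density (gamma_pdf k \<theta>) w = ennreal (k * \<theta> / 2 / (1 + \<theta> * \<bar>w\<bar>) powr (k + 1))"
proof -
  have pointwise: "gamma_pdf k \<theta> l * laplace_pdf l w = 1/2 * (gamma_pdf k \<theta> l * l * exp (- (\<bar>w\<bar> * l)))" for l
    by (cases "0 < l") (auto simp: laplace_pdf_def gamma_pdf_nonpos mult_ac)
  have "laplace_mixture_density (gamma_pdf k \<theta>) w
      = (\<integral>\<^sup>+l. ennreal (1/2) * ennreal (gamma_pdf k \<theta> l * l * exp (- (\<bar>w\<bar> * l))) \<partial>lborel)"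
    unfolding laplace_mixture_density_def pointwise by (intro nn_integral_cong ennreal_mult') simp
  also have "\<dots> = ennreal (1/2) * ennreal (k * \<theta> / (1 + \<theta> * \<bar>w\<bar>) powr (k + 1))"
    using assms by (simp add: nn_integral_cmult nn_integral_gamma_pdf_times_exp add_pos_nonneg)
  also have "\<dots> = ennreal (1/2 * (k * \<theta> / (1 + \<theta> * \<bar>w\<bar>) powr (k + 1)))"
    by (rule ennreal_mult'[symmetric]) simp
  also have "\<dots> = ennreal (k * \<theta> / 2 / (1 + \<theta> * \<bar>w\<bar>) powr (k + 1))"
    by simp
  finally show ?thesis .
qed

lemma one_plus_abs_add_le:
  fixes \<theta> w c :: real
  assumes "0 \<le> \<theta>"
  shows "1 + \<theta> * \<bar>w + c\<bar> \<le> (1 + \<theta> * \<bar>c\<bar>) * (1 + \<theta> * \<bar>w\<bar>)"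
proof -
  have "\<theta> * \<bar>w + c\<bar> \<le> \<theta> * \<bar>w\<bar> + \<theta> * \<bar>c\<bar>"
    using mult_left_mono[OF abs_triangle_ineq assms] by (simp add: distrib_left)
  moreover have "0 \<le> \<theta> * \<bar>c\<bar> * (\<theta> * \<bar>w\<bar>)"
    using assms by simp
  ultimately show ?thesis
    by (simp add: algebra_simps)
qed

lemma laplace_mixture_density_gamma_pdf_shift_le:
  assumes k: "0 < k" and \<theta>: "0 < \<theta>" and c: "\<bar>c\<bar> \<le> \<Delta>"
  shows "laplace_mixture_density (gamma_pdf k \<theta>) w
       \<le> ennreal ((1 + \<Delta> * \<theta>) powr (k + 1)) * laplace_mixture_density (gamma_pdf k \<theta>) (w + c)"
proof -
  define X where "X = (1 + \<theta> * \<bar>w\<bar>) powr (k + 1)"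
  define Y where "Y = (1 + \<theta> * \<bar>w + c\<bar>) powr (k + 1)"
  define E where "E = (1 + \<Delta> * \<theta>) powr (k + 1)"
  have "1 + \<theta> * \<bar>c\<bar> \<le> 1 + \<Delta> * \<theta>"
    using mult_left_mono[OF c, of \<theta>] \<theta> by (simp add: mult.commute)
  then have "(1 + \<theta> * \<bar>c\<bar>) * (1 + \<theta> * \<bar>w\<bar>) \<le> (1 + \<Delta> * \<theta>) * (1 + \<theta> * \<bar>w\<bar>)"
    using \<theta> by (intro mult_right_mono) auto
  then have "1 + \<theta> * \<bar>w + c\<bar> \<le> (1 + \<Delta> * \<theta>) * (1 + \<theta> * \<bar>w\<bar>)"
    using one_plus_abs_add_le[of \<theta> w c] \<theta> by linarith
  then have "Y \<le> ((1 + \<Delta> * \<theta>) * (1 + \<theta> * \<bar>w\<bar>)) powr (k + 1)"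
    unfolding Y_def using k \<theta> by (intro powr_mono2) auto
  also have "\<dots> = E * X"
    unfolding E_def X_def using \<theta> c abs_ge_zero[of c] by (simp add: powr_mult)
  finally have "k * \<theta> / 2 * Y \<le> k * \<theta> / 2 * (E * X)"
    using k \<theta> by simp
  moreover have "0 < 1 + \<theta> * \<bar>w\<bar>" "0 < 1 + \<theta> * \<bar>w + c\<bar>"
    using \<theta> by (simp_all add: add_pos_nonneg)
  then have "0 < X" "0 < Y" "0 \<le> E"
    by (simp_all add: X_def Y_def E_def)
  ultimately have "k * \<theta> / 2 / X \<le> E * (k * \<theta> / 2 / Y)"
    by (simp add: field_simps)
  then show ?thesis
    using \<open>0 \<le> E\<close> k \<theta>
    by (simp add: laplace_mixture_density_gamma_pdf X_def Y_def E_def ennreal_mult'[symmetric] ennreal_leI)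
qed

theorem mainTheorem9:
  fixes adj :: "'d \<Rightarrow> 'd \<Rightarrow> bool" and q :: "'d \<Rightarrow> real"
    and \<Delta> k \<theta> :: real
  assumes "symp adj"
    and "sensitivity adj q = ereal \<Delta>" and "0 < \<Delta>"
    and "0 < k" and "0 < \<theta>"
  shows "differentially_private adj (rdp_laplace_mech (gamma_pdf k \<theta>) q)
           ((k + 1) * ln (1 + \<Delta> * \<theta>))
         \<and> ln (mean_of_pdf (gamma_pdf k \<theta>) / mgf_deriv_of_pdf (gamma_pdf k \<theta>) (- \<Delta>))
           = (k + 1) * ln (1 + \<Delta> * \<theta>)"
proof
  note sensitivity = assms(2) and \<Delta> = assms(3) and k = assms(4) and \<theta> = assms(5)
  let ?f = "gamma_pdf k \<theta>"
  have base: "0 < 1 + \<Delta> * \<theta>"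
    using mult_pos_pos[OF \<Delta> \<theta>] by linarith
  have mech: "rdp_laplace_mech ?f q = (\<lambda>d. distr (density lborel (laplace_mixture_density ?f)) borel (\<lambda>w. q d + w))"
    by (intro ext rdp_laplace_mech_eq_distr) measurable
  have mass: "(\<integral>\<^sup>+w. laplace_mixture_density ?f w \<partial>lborel) \<le> 1"
    using nn_integral_laplace_mixture_density_le[of ?f] nn_integral_gamma_pdf[OF k \<theta>] by simp
  show "differentially_private adj (rdp_laplace_mech ?f q) ((k + 1) * ln (1 + \<Delta> * \<theta>))"
    unfolding mech
  proof (rule differentially_private_additive_noise[where \<Delta> = \<Delta>])
    show "(\<integral>\<^sup>+w. laplace_mixture_density ?f w \<partial>lborel) \<noteq> \<infinity>"
      using mass by (auto simp: top_unique)
    show "laplace_mixture_density ?f w \<le> ennreal (exp ((k + 1) * ln (1 + \<Delta> * \<theta>)))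
                                          * laplace_mixture_density ?f (w + c)" if "\<bar>c\<bar> \<le> \<Delta>" for w c
      using laplace_mixture_density_gamma_pdf_shift_le[OF k \<theta> that] base by (simp add: powr_def mult.commute)
    show "sensitivity adj q \<le> ereal \<Delta>"
      using sensitivity by simp
  qed measurable
  have "mgf_deriv_of_pdf ?f (- \<Delta>) = k * \<theta> / (1 + \<Delta> * \<theta>) powr (k + 1)"
    using mgf_deriv_of_gamma_pdf[OF k \<theta>, of "- \<Delta>"] base by (simp add: mult.commute)
  then have "mean_of_pdf ?f / mgf_deriv_of_pdf ?f (- \<Delta>) = (1 + \<Delta> * \<theta>) powr (k + 1)"
    using k \<theta> by (simp add: mean_of_gamma_pdf)
  then show "ln (mean_of_pdf ?f / mgf_deriv_of_pdf ?f (- \<Delta>)) = (k + 1) * ln (1 + \<Delta> * \<theta>)"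
    using base by (simp add: ln_powr)
qed

end
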